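(* Let $\{\mu_n^{(m)}:1\le n\le m\}$ be a family of smooth functions, $\mu_n^{(m)}$ a function of $(\nu_n,\dots,\nu_m)$, with $\mu_n^{(m)}(0,\dots,0)=0$, satisfying for all $1\le n\le m$ $$\mu_n^{(m)}(\nu_n,\dots,\nu_m)=\begin{cases}\dfrac{\nu_m^{m+1}}{m+1},& n=m,\\[2mm] \displaystyle\sum_{k=0}^n\binom nk\nu_m^{\,n-k}\,\mu_k^{(m-n-1)}(\nu_{k+n},\dots,\nu_{m-1}),& n<m,\end{cases}$$ (equivalently, $\partial\mu_n^{(m)}/\partial\nu_k=n\,\mu_{n-1}^{(k-1)}(\nu_{m-k+n},\dots,\nu_m)$ for $k=n,\dots,m$), with the conventions $\mu_0^{(l)}(x_0,\dots,x_l)=x_0$ and $\mu_k^{(l)}\equiv0$ if $k>l$ or $l<0$. Then for every level $m\ge1$ and all $k,l\in\{1,\dots,m\}$, $$\sum_{j=1}^m\frac{\partial\mu_k^{(m)}}{\partial\nu_j}\frac{\partial\mu_l^{(m)}}{\partial\nu_{m+1-j}}=(k+l)\mu_{k+l-1}^{(m)},\qquad \sum_{j=1}^m\partial_x\Big(\frac{\partial\mu_k^{(m)}}{\partial\nu_j}\Big)\frac{\partial\mu_l^{(m)}}{\partial\nu_{m+1-j}}=k\,\partial_x\mu_{k+l-1}^{(m)},$$ where $\mu_j^{(m)}:=0$ for $j\ge m+1$ and the second identity holds for any smooth dependence of $\nu_1,\dots,\nu_m$ on $x$. In other words, $\mu_k=\mu_k^{(m)}(\boldsymbol\nu)$ flattens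 the bracket with $\alpha_{kl}=(k+l)\mu_{k+l-1}$, $\beta_{kl}=k\partial_x\mu_{k+l-1}$ to the constant antidiagonal metric $g_{ij}=\delta_{i+j,m+1}$. *)

theory Defs
  imports "HOL-Analysis.Analysis"
begin

(* mu n m x  =  mu_n^{(m)}(x_n, ..., x_m); the variables are given as a function
   x :: nat => real, of which only the entries x_n..x_m are read. *)
function mu :: "nat \<Rightarrow> nat \<Rightarrow> (nat \<Rightarrow> real) \<Rightarrow> real" where
  "mu n m x =
     (if n = 0 then x 0
      else if m < n then 0
      else if n = m then x m ^ (m + 1) / real (m + 1)
      else (\<Sum>k = 0..n. real (n choose k) * x m ^ (n - k)
                          * mu k (m - n - 1) (\<lambda>i. x (i + n))))"
  by pat_completeness auto
termination
  by (relation "Wellfounded.measure (\<lambda>(n, m, x). m)") auto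

declare mu.simps[simp del]

definition partial :: "((nat \<Rightarrow> real) \<Rightarrow> real) \<Rightarrow> nat \<Rightarrow> (nat \<Rightarrow> real) \<Rightarrow> real" where
  "partial f j v = deriv (\<lambda>t. f (v(j := t))) (v j)"

definition smooth_fun :: "(real \<Rightarrow> real) \<Rightarrow> bool" where
  "smooth_fun f \<longleftrightarrow> (\<forall>n x. ((deriv ^^ n) f) differentiable (at x))"

end

theory Submission
  imports Defs "HOL-Computational_Algebra.Polynomial"
begin

(* Put V = nu_m t + nu_(m-1) t^2 + ... + nu_0 t^(m+1), i.e. nu_poly m nu. Since V = t (nu_m + W)
   with W the same polynomial one level down, the binomial expansion of V^(n+1) reproduces the
   recursion defining mu, so (n+1) mu_n^(m) is the coefficient of t^(m+1) in V^(n+1).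
   Consequently d mu_k / d nu_j is the coefficient of t^j in V^k, and both identities are the
   Cauchy product formula for the coefficient of t^(m+1) in V^k V^l = V^(k+l),
   resp. in (V^(k-1) dV/dx) V^l. *)

lemma pCons_0_power: "pCons 0 p ^ n = monom 1 n * p ^ n"
  by (induction n) (auto simp: monom_Suc mult_ac)

lemma coeff_pCons_0_power:
  "coeff (pCons 0 p ^ n) d = (if d < n then 0 else coeff (p ^ n) (d - n))"
  by (simp add: pCons_0_power coeff_monom_mult)

lemma coeff_power_eq_0_below:
  assumes "coeff p 0 = 0" "d < n"
  shows "coeff (p ^ n) d = 0"
  using assms by (cases p rule: pCons_cases) (simp add: coeff_pCons_0_power)

lemma coeff_power_at_exponent:
  assumes "coeff p 0 = 0"
  shows "coeff (p ^ n) n = coeff p 1 ^ n"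
  using assms by (cases p rule: pCons_cases) (simp add: coeff_pCons_0_power coeff_0_power)

lemma coeff_const_plus_power:
  fixes c :: "'a::comm_semiring_1"
  shows "coeff (([:c:] + p) ^ n) d = (\<Sum>j\<le>n. of_nat (n choose j) * c ^ (n - j) * coeff (p ^ j) d)"
  by (subst add.commute, subst binomial_ring) (simp add: coeff_sum of_nat_poly poly_const_pow mult_ac)

lemma coeff_power_cong:
  assumes "\<And>i. i \<le> d \<Longrightarrow> coeff p i = coeff q i" "e \<le> d"
  shows "coeff (p ^ n) e = coeff (q ^ n) e"
  using assms(2)
proof (induction n arbitrary: e)
  case (Suc n)
  then show ?case
    using assms(1) by (auto simp: coeff_mult intro!: sum.cong)
qed simp

lemma coeff_mult_Suc_eq_sum:
  assumes "coeff p 0 = 0" "coeff q 0 = 0"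
  shows "coeff (p * q) (Suc m) = (\<Sum>j = 1..m. coeff p j * coeff q (m + 1 - j))"
  using assms by (simp add: coeff_mult atMost_atLeast0 sum.atLeast_Suc_atMost)

lemma has_field_derivative_coeff_power:
  fixes P :: "'a \<Rightarrow> 'a::real_normed_field poly"
  assumes "\<And>i. ((\<lambda>y. coeff (P y) i) has_field_derivative coeff D i) (at x within S)"
  shows "((\<lambda>y. coeff (P y ^ n) d) has_field_derivative of_nat n * coeff (P x ^ (n - 1) * D) d)
           (at x within S)"
proof (induction n arbitrary: d)
  case (Suc n)
  have "((\<lambda>y. \<Sum>i\<le>d. coeff (P y) i * coeff (P y ^ n) (d - i)) has_field_derivative
         (\<Sum>i\<le>d. coeff D i * coeff (P x ^ n) (d - i)
                   + of_nat n * coeff (P x ^ (n - 1) * D) (d - i) * coeff (P x) i)) (at x within S)"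
    by (intro DERIV_sum DERIV_mult assms Suc.IH)
  also have "(\<Sum>i\<le>d. coeff D i * coeff (P x ^ n) (d - i)
                   + of_nat n * coeff (P x ^ (n - 1) * D) (d - i) * coeff (P x) i)
      = coeff (D * P x ^ n) d + of_nat n * coeff (P x * (P x ^ (n - 1) * D)) d"
    unfolding coeff_mult[of D] coeff_mult[of "P x"] by (simp add: sum.distrib sum_distrib_left mult_ac)
  also have "\<dots> = of_nat (Suc n) * coeff (P x ^ (Suc n - 1) * D) d"
    by (cases n) (simp_all add: algebra_simps)
  finally show ?case
    by (simp only: power_Suc coeff_mult)
qed simp

definition nu_poly :: "nat \<Rightarrow> (nat \<Rightarrow> 'a::comm_monoid_add) \<Rightarrow> 'a poly" where
  "nu_poly m x = (\<Sum>j\<le>m. monom (x j) (Suc m - j))"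

lemma coeff_nu_poly:
  "coeff (nu_poly m x) i = (if 0 < i \<and> i \<le> Suc m then x (Suc m - i) else 0)"
proof -
  have "coeff (nu_poly m x) i = (\<Sum>j\<le>m. if j = Suc m - i \<and> 0 < i \<and> i \<le> Suc m then x j else 0)"
    unfolding nu_poly_def coeff_sum coeff_monom by (intro sum.cong) auto
  then show ?thesis by auto
qed

lemma nu_poly_Suc: "nu_poly (Suc m) x = pCons 0 ([:x (Suc m):] + nu_poly m x)"
  by (rule poly_eqI) (auto simp: coeff_nu_poly coeff_pCons split: nat.split)

lemma coeff_nu_poly_shift:
  "i \<le> Suc r \<Longrightarrow> coeff (nu_poly (n + r) x) i = coeff (nu_poly r (\<lambda>i. x (i + n))) i"
  by (simp add: coeff_nu_poly add.commute)

lemma nu_poly_delta: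
  "j \<le> m \<Longrightarrow> nu_poly m (\<lambda>i. if i = j then 1 else 0) = monom 1 (Suc m - j)"
  unfolding nu_poly_def
  by (subst sum.cong[OF refl, where h = "\<lambda>i. if i = j then monom 1 (Suc m - i) else 0"]) auto

lemma has_field_derivative_coeff_nu_poly:
  assumes "\<And>j. j \<le> m \<Longrightarrow> ((\<lambda>y. X y j) has_field_derivative X' j) (at x within S)"
  shows "((\<lambda>y. coeff (nu_poly m (X y)) i) has_field_derivative coeff (nu_poly m X') i) (at x within S)"
  by (cases "0 < i \<and> i \<le> Suc m") (auto simp: coeff_nu_poly intro!: assms)

lemma mu_eq_coeff_nu_poly_power:
  "real (Suc n) * mu n m x = coeff (nu_poly m x ^ Suc n) (Suc m)"
proof (induction m arbitrary: n x rule: less_induct)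
  case (less m)
  consider "n = 0" | "m < n" | "n = m" "0 < n" | "0 < n" "n < m" by linarith
  then show ?case
  proof cases
    case 1
    then show ?thesis by (simp add: mu.simps coeff_nu_poly)
  next
    case 2
    then show ?thesis by (simp add: mu.simps coeff_power_eq_0_below coeff_nu_poly del: power_Suc)
  next
    case 3
    then show ?thesis by (simp add: mu.simps coeff_power_at_exponent coeff_nu_poly del: power_Suc)
  next
    case 4
    define r where "r = m - n - 1"
    define s where "s = (\<lambda>i. x (i + n))"
    have m: "m = Suc (n + r)" using 4 by (simp add: r_def)
    have shift: "coeff (nu_poly (n + r) x ^ j) (Suc r) = coeff (nu_poly r s ^ j) (Suc r)" for j
      by (rule coeff_power_cong[of "Suc r"]) (simp_all add: s_def coeff_nu_poly_shift)
    have "coeff (nu_poly m x ^ Suc n) (Suc m)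
        = coeff (([:x m:] + nu_poly (n + r) x) ^ Suc n) (Suc r)"
      by (simp add: m nu_poly_Suc coeff_pCons_0_power del: power_Suc)
    also have "\<dots> = (\<Sum>j\<le>Suc n. of_nat (Suc n choose j) * x m ^ (Suc n - j)
                                 * coeff (nu_poly (n + r) x ^ j) (Suc r))"
      by (rule coeff_const_plus_power)
    also have "\<dots> = (\<Sum>k\<le>n. of_nat (Suc n choose Suc k) * x m ^ (n - k)
                                 * coeff (nu_poly (n + r) x ^ Suc k) (Suc r))"
      by (simp only: sum.atMost_Suc_shift) (simp del: binomial_Suc_Suc)
    also have "\<dots> = (\<Sum>k\<le>n. of_nat (Suc n choose Suc k) * x m ^ (n - k)
                                 * coeff (nu_poly r s ^ Suc k) (Suc r))"
      by (simp only: shift)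
    also have "\<dots> = (\<Sum>k\<le>n. of_nat (Suc n choose Suc k) * x m ^ (n - k)
                                 * (real (Suc k) * mu k r s))"
      using less.IH[of r] by (simp add: m)
    also have "\<dots> = real (Suc n) * (\<Sum>k\<le>n. real (n choose k) * x m ^ (n - k) * mu k r s)"
      unfolding sum_distrib_left
    proof (intro sum.cong refl)
      fix k
      have "real (Suc n choose Suc k) * real (Suc k) = real (Suc n) * real (n choose k)"
        by (metis Suc_times_binomial mult.commute of_nat_mult)
      then show "real (Suc n choose Suc k) * x m ^ (n - k) * (real (Suc k) * mu k r s)
          = real (Suc n) * (real (n choose k) * x m ^ (n - k) * mu k r s)"
        by (metis mult.assoc mult.left_commute)
    qed
    also have "\<dots> = real (Suc n) * mu n m x"
      using 4 by (subst (2) mu.simps) (simp add: r_def s_def atLeast0AtMost)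
    finally show ?thesis ..
  qed
qed

lemma has_real_derivative_mu:
  assumes "\<And>j. j \<le> m \<Longrightarrow> ((\<lambda>y. X y j) has_real_derivative X' j) (at x within S)"
  shows "((\<lambda>y. mu n m (X y)) has_real_derivative
            coeff (nu_poly m (X x) ^ n * nu_poly m X') (Suc m)) (at x within S)"
proof -
  have "((\<lambda>y. coeff (nu_poly m (X y) ^ Suc n) (Suc m)) has_real_derivative
          real (Suc n) * coeff (nu_poly m (X x) ^ n * nu_poly m X') (Suc m)) (at x within S)"
    using has_field_derivative_coeff_power[of "\<lambda>y. nu_poly m (X y)" "nu_poly m X'" x S "Suc n"]
    by (simp add: has_field_derivative_coeff_nu_poly assms)
  then have "((\<lambda>y. coeff (nu_poly m (X y) ^ Suc n) (Suc m) / real (Suc n)) has_real_derivative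
          real (Suc n) * coeff (nu_poly m (X x) ^ n * nu_poly m X') (Suc m) / real (Suc n))
          (at x within S)"
    by (rule DERIV_cdivide)
  moreover have "mu n m (X y) = coeff (nu_poly m (X y) ^ Suc n) (Suc m) / real (Suc n)" for y
    unfolding mu_eq_coeff_nu_poly_power[symmetric] by simp
  ultimately show ?thesis
    by simp
qed

lemma partial_mu:
  assumes "j \<le> m"
  shows "partial (mu n m) j x = coeff (nu_poly m x ^ n) j"
proof -
  have "((\<lambda>t. mu n m (x(j := t))) has_real_derivative
          coeff (nu_poly m (x(j := x j)) ^ n * nu_poly m (\<lambda>i. if i = j then 1 else 0)) (Suc m))
          (at (x j))"
    by (rule has_real_derivative_mu) auto
  then have "((\<lambda>t. mu n m (x(j := t))) has_real_derivative
          coeff (monom 1 (Suc m - j) * nu_poly m x ^ n) (Suc m)) (at (x j))"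
    by (simp add: nu_poly_delta assms mult.commute)
  then show ?thesis
    using assms by (simp add: partial_def DERIV_imp_deriv coeff_monom_mult)
qed

lemma mu_fun_upd_0: "0 < n \<Longrightarrow> mu n m (x(0 := c)) = mu n m x"
  by (subst (1 2) mu.simps) simp

lemma partial_mu_fun_upd_0: "0 < n \<Longrightarrow> 0 < j \<Longrightarrow> partial (mu n m) j (x(0 := c)) = partial (mu n m) j x"
proof -
  assume "0 < n" "0 < j"
  then have "x(0 := c, j := t) = (x(j := t))(0 := c)" for t
    by (simp add: fun_upd_twist)
  with \<open>0 < n\<close> \<open>0 < j\<close> show ?thesis
    by (simp add: partial_def mu_fun_upd_0)
qed

lemma sum_partial_mu_mult_partial_mu:
  assumes "0 < k" "0 < l"
  shows "(\<Sum>j = 1..m. partial (mu k m) j v * partial (mu l m) (m + 1 - j) v)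
           = real (k + l) * mu (k + l - 1) m v"
proof -
  let ?V = "nu_poly m v"
  have "(\<Sum>j = 1..m. partial (mu k m) j v * partial (mu l m) (m + 1 - j) v)
      = (\<Sum>j = 1..m. coeff (?V ^ k) j * coeff (?V ^ l) (m + 1 - j))"
    by (intro sum.cong refl) (auto simp: partial_mu)
  also have "\<dots> = coeff (?V ^ k * ?V ^ l) (Suc m)"
    using assms by (intro coeff_mult_Suc_eq_sum[symmetric]) (simp_all add: coeff_0_power coeff_nu_poly)
  also have "\<dots> = real (k + l) * mu (k + l - 1) m v"
    using assms mu_eq_coeff_nu_poly_power[of "k + l - 1" m v] by (simp add: power_add)
  finally show ?thesis .
qed

lemma sum_deriv_partial_mu_mult_partial_mu:
  assumes "0 < k" "0 < l"
    and "\<And>j. j \<le> m \<Longrightarrow> ((\<lambda>y. X y j) has_real_derivative X' j) (at x)"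
  shows "(\<Sum>j = 1..m. deriv (\<lambda>y. partial (mu k m) j (X y)) x * partial (mu l m) (m + 1 - j) (X x))
           = real k * deriv (\<lambda>y. mu (k + l - 1) m (X y)) x"
proof -
  let ?V = "nu_poly m (X x)" and ?V' = "nu_poly m X'"
  have deriv_coeff: "deriv (\<lambda>y. coeff (nu_poly m (X y) ^ k) j) x = real k * coeff (?V ^ (k - 1) * ?V') j"
    for j
    by (intro DERIV_imp_deriv has_field_derivative_coeff_power has_field_derivative_coeff_nu_poly assms)
  have "(\<Sum>j = 1..m. deriv (\<lambda>y. partial (mu k m) j (X y)) x * partial (mu l m) (m + 1 - j) (X x))
      = real k * (\<Sum>j = 1..m. coeff (?V ^ (k - 1) * ?V') j * coeff (?V ^ l) (m + 1 - j))"
    unfolding sum_distrib_left by (intro sum.cong refl) (auto simp: deriv_coeff partial_mu)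
  also have "\<dots> = real k * coeff (?V ^ (k - 1) * ?V' * ?V ^ l) (Suc m)"
    using assms by (subst coeff_mult_Suc_eq_sum) (simp_all add: coeff_mult_0 coeff_0_power coeff_nu_poly)
  also have "?V ^ (k - 1) * ?V' * ?V ^ l = ?V ^ (k + l - 1) * ?V'"
  proof -
    have "k + l - 1 = (k - 1) + l"
      using assms by simp
    then show ?thesis
      by (simp only: power_add mult_ac)
  qed
  also have "coeff \<dots> (Suc m) = deriv (\<lambda>y. mu (k + l - 1) m (X y)) x"
    by (intro DERIV_imp_deriv[symmetric] has_real_derivative_mu assms)
  finally show ?thesis .
qed

theorem proposition4:
  fixes m k l :: nat and v :: "nat \<Rightarrow> real"
    and \<nu> :: "real \<Rightarrow> nat \<Rightarrow> real" and x0 :: real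
  assumes "1 \<le> m" and "k \<in> {1..m}" and "l \<in> {1..m}"
    and "\<forall>i\<in>{1..m}. smooth_fun (\<lambda>x. \<nu> x i)"
  shows "(\<Sum>j = 1..m. partial (mu k m) j v * partial (mu l m) (m + 1 - j) v)
           = real (k + l) * mu (k + l - 1) m v
       \<and> (\<Sum>j = 1..m. deriv (\<lambda>x. partial (mu k m) j (\<nu> x)) x0
                        * partial (mu l m) (m + 1 - j) (\<nu> x0))
           = real k * deriv (\<lambda>x. mu (k + l - 1) m (\<nu> x)) x0"
proof
  have k: "0 < k" and l: "0 < l"
    using assms by auto
  show "(\<Sum>j = 1..m. partial (mu k m) j v * partial (mu l m) (m + 1 - j) v)
          = real (k + l) * mu (k + l - 1) m v"
    by (rule sum_partial_mu_mult_partial_mu[OF k l])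
  \<comment> \<open>\<open>mu n m\<close> ignores the entry \<open>0\<close> when \<open>n > 0\<close>, and \<open>\<nu> x 0\<close> need not be differentiable\<close>
  define \<nu>\<^sub>0 where "\<nu>\<^sub>0 x = (\<nu> x)(0 := 0)" for x
  have \<nu>\<^sub>0_deriv: "((\<lambda>x. \<nu>\<^sub>0 x j) has_real_derivative deriv (\<lambda>x. \<nu>\<^sub>0 x j) x0) (at x0)"
    if "j \<le> m" for j
  proof (cases "j = 0")
    case False
    with that assms(4) have "smooth_fun (\<lambda>x. \<nu> x j)"
      by simp
    then have "(\<lambda>x. \<nu> x j) differentiable (at x0)"
      unfolding smooth_fun_def by (metis funpow_0)
    with False show ?thesis
      by (simp add: \<nu>\<^sub>0_def DERIV_deriv_iff_real_differentiable)
  qed (simp add: \<nu>\<^sub>0_def)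
  have "(\<Sum>j = 1..m. deriv (\<lambda>x. partial (mu k m) j (\<nu> x)) x0 * partial (mu l m) (m + 1 - j) (\<nu> x0))
      = (\<Sum>j = 1..m. deriv (\<lambda>x. partial (mu k m) j (\<nu>\<^sub>0 x)) x0
                      * partial (mu l m) (m + 1 - j) (\<nu>\<^sub>0 x0))"
    using k l by (intro sum.cong refl) (auto simp: \<nu>\<^sub>0_def partial_mu_fun_upd_0)
  also have "\<dots> = real k * deriv (\<lambda>x. mu (k + l - 1) m (\<nu>\<^sub>0 x)) x0"
    by (rule sum_deriv_partial_mu_mult_partial_mu[OF k l \<nu>\<^sub>0_deriv])
  also have "\<dots> = real k * deriv (\<lambda>x. mu (k + l - 1) m (\<nu> x)) x0"
    using k l by (simp add: \<nu>\<^sub>0_def mu_fun_upd_0)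
  finally show "(\<Sum>j = 1..m. deriv (\<lambda>x. partial (mu k m) j (\<nu> x)) x0 * partial (mu l m) (m + 1 - j) (\<nu> x0))
      = real k * deriv (\<lambda>x. mu (k + l - 1) m (\<nu> x)) x0" .
qed

end
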